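(* Let $G$ be a tree with at least $2$ vertices. Then a minimum connecting transition set of $G$ has size exactly $|V(G)|-2$.
   Context: All graphs are finite, simple and undirected. A transition of a graph $G$ is an unordered pair $\{ab,bc\}$ of two distinct edges of $G$ sharing the vertex $b$ (so $a\neq c$); it is written $abc$. A walk in $G$ is a sequence $(v_1,\dots,v_k)$ of vertices with $v_iv_{i+1}\in E(G)$ for all $i\le k-1$; it leads from $v_1$ to $v_k$. For a set $T$ of transitions of $G$, a walk $(v_1,\dots,v_k)$ is $T$-compatible if for every $i\in[1,k-2]$, either $v_i=v_{i+2}$ or $v_iv_{i+1}v_{i+2}\in T$. The graph $G$ is $T$-connected, and $T$ is a connecting transition set of $G$, if for all vertices $u,v$ of $G$ there is a $T$-compatible walk leading from $u$ to $v$. A minimum connecting transition set is a connecting transition set of minimum cardinality. *)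

theory Defs
  imports Main
begin

definition simple_graph :: "'a set \<Rightarrow> ('a \<Rightarrow> 'a \<Rightarrow> bool) \<Rightarrow> bool" where
  "simple_graph V E \<longleftrightarrow> finite V \<and> (\<forall>x y. E x y \<longrightarrow> E y x) \<and> (\<forall>x. \<not> E x x)
     \<and> (\<forall>x y. E x y \<longrightarrow> x \<in> V \<and> y \<in> V)"

definition is_walk :: "'a set \<Rightarrow> ('a \<Rightarrow> 'a \<Rightarrow> bool) \<Rightarrow> 'a list \<Rightarrow> bool" where
  "is_walk V E ws \<longleftrightarrow> ws \<noteq> [] \<and> set ws \<subseteq> V \<and> (\<forall>i. Suc i < length ws \<longrightarrow> E (ws ! i) (ws ! Suc i))"

definition connected_graph :: "'a set \<Rightarrow> ('a \<Rightarrow> 'a \<Rightarrow> bool) \<Rightarrow> bool" where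
  "connected_graph V E \<longleftrightarrow> (\<forall>u\<in>V. \<forall>v\<in>V. \<exists>ws. is_walk V E ws \<and> hd ws = u \<and> last ws = v)"

definition has_cycle :: "'a set \<Rightarrow> ('a \<Rightarrow> 'a \<Rightarrow> bool) \<Rightarrow> bool" where
  "has_cycle V E \<longleftrightarrow> (\<exists>cs. length cs \<ge> 3 \<and> distinct cs \<and> is_walk V E cs \<and> E (last cs) (hd cs))"

definition is_tree :: "'a set \<Rightarrow> ('a \<Rightarrow> 'a \<Rightarrow> bool) \<Rightarrow> bool" where
  "is_tree V E \<longleftrightarrow> simple_graph V E \<and> connected_graph V E \<and> \<not> has_cycle V E"

text \<open>A transition abc = {ab, bc} (a \<noteq> c) is represented by its middle vertex b
together with the unordered set {a, c} of its end vertices; this encodes exactly the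
unordered pair of edges {ab, bc}.\<close>
definition transitions :: "('a \<Rightarrow> 'a \<Rightarrow> bool) \<Rightarrow> ('a \<times> 'a set) set" where
  "transitions E = {(b, {a, c}) | a b c. E a b \<and> E b c \<and> a \<noteq> c}"

definition T_compatible :: "('a \<times> 'a set) set \<Rightarrow> 'a list \<Rightarrow> bool" where
  "T_compatible T ws \<longleftrightarrow> (\<forall>i. i + 2 < length ws \<longrightarrow>
      ws ! i = ws ! (i + 2) \<or> (ws ! (i + 1), {ws ! i, ws ! (i + 2)}) \<in> T)"

definition connecting_transition_set ::
  "'a set \<Rightarrow> ('a \<Rightarrow> 'a \<Rightarrow> bool) \<Rightarrow> ('a \<times> 'a set) set \<Rightarrow> bool" where
  "connecting_transition_set V E T \<longleftrightarrow> T \<subseteq> transitions E \<and>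
     (\<forall>u\<in>V. \<forall>v\<in>V. \<exists>ws. is_walk V E ws \<and> T_compatible T ws \<and> hd ws = u \<and> last ws = v)"

definition min_connecting_transition_set ::
  "'a set \<Rightarrow> ('a \<Rightarrow> 'a \<Rightarrow> bool) \<Rightarrow> ('a \<times> 'a set) set \<Rightarrow> bool" where
  "min_connecting_transition_set V E T \<longleftrightarrow> connecting_transition_set V E T \<and>
     (\<forall>T'. connecting_transition_set V E T' \<longrightarrow> card T \<le> card T')"

end

theory Submission
  imports Defs
begin

text \<open>A \<open>T\<close>-compatible walk is a walk in the digraph whose vertices are the arcs (ordered
edges) of \<open>G\<close>, where the arc \<open>xy\<close> steps to \<open>yz\<close> if \<open>x = z\<close> or \<open>xyz \<in> T\<close>. Both bounds are proved
by removing a leaf \<open>l\<close> with neighbour \<open>p\<close>. If all arcs of \<open>G - l\<close> are mutually reachable,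
adding the single transition \<open>lpq\<close> for another neighbour \<open>q\<close> of \<open>p\<close> makes all arcs of \<open>G\<close>
mutually reachable, the arcs \<open>lp\<close> and \<open>pl\<close> being joined by the backtrack \<open>plp\<close>; a single edge
needs no transition, so \<open>|V| - 2\<close> transitions suffice. Conversely, a connecting set \<open>T\<close> of \<open>G\<close>
contains some transition \<open>lpx\<close>, because a walk from \<open>l\<close> to \<open>q\<close> has to turn at \<open>p\<close>. Identifying
\<open>l\<close> with \<open>x\<close> maps \<open>T\<close>-compatible walks to walks of \<open>G - l\<close> compatible with the image of \<open>T\<close>, in
which \<open>lpx\<close> becomes the backtrack \<open>xpx\<close> and can be dropped; so \<open>G - l\<close> has a connecting set
of size at most \<open>|T| - 1\<close>.\<close>

lemma T_compatible_short [simp]: "length ws < 3 \<Longrightarrow> T_compatible T ws"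
  unfolding T_compatible_def by simp

lemma T_compatible_Cons3 [simp]:
  "T_compatible T (a # b # c # r) \<longleftrightarrow> (a = c \<or> (b, {a, c}) \<in> T) \<and> T_compatible T (b # c # r)"
proof -
  have split_first: "(\<forall>i. P i) \<longleftrightarrow> P 0 \<and> (\<forall>i. P (Suc i))" for P :: "nat \<Rightarrow> bool"
    by (metis not0_implies_Suc)
  show ?thesis
    unfolding T_compatible_def by (subst (1) split_first) simp
qed

lemma T_compatible_ConsD: "T_compatible T (a # ws) \<Longrightarrow> T_compatible T ws"
  unfolding T_compatible_def by (metis add_Suc length_Cons nth_Cons_Suc Suc_less_eq)

lemma T_compatible_append:
  "T_compatible T (xs @ y # z # ys) \<longleftrightarrow> T_compatible T (xs @ [y, z]) \<and> T_compatible T (y # z # ys)"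
proof (induction xs)
  case (Cons x xs)
  show ?case
  proof (cases xs)
    case (Cons x' xs')
    then show ?thesis using Cons.IH by (cases xs') auto
  qed auto
qed simp

lemma T_compatible_map:
  assumes "successively E ws" and "T_compatible T ws"
    and "\<And>a b c. E a b \<Longrightarrow> E b c \<Longrightarrow> a \<noteq> c \<Longrightarrow> (b, {a, c}) \<in> T \<Longrightarrow>
           f a = f c \<or> (f b, {f a, f c}) \<in> T'"
  shows "T_compatible T' (map f ws)"
  using assms
proof (induction ws rule: induct_list012)
  case (3 x y zs)
  then show ?case by (cases zs) auto
qed simp_all

lemma successively_remdups_adj_reflclp:
  "successively (\<lambda>x y. x = y \<or> R x y) xs \<Longrightarrow> successively R (remdups_adj xs)"
proof (induction xs rule: remdups_adj.induct)
  case (3 x y xs)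
  then show ?case
    using hd_remdups_adj[of "y # xs"]
    by (cases "remdups_adj (y # xs)") (auto simp: remdups_adj_Cons_alt)
qed simp_all

lemma simple_graphD:
  assumes "simple_graph V E"
  shows "finite V" and "E x y \<Longrightarrow> E y x" and "\<not> E x x"
    and "E x y \<Longrightarrow> x \<in> V" and "E x y \<Longrightarrow> y \<in> V"
  using assms unfolding simple_graph_def by auto

lemma is_walk_iff: "is_walk V E ws \<longleftrightarrow> ws \<noteq> [] \<and> set ws \<subseteq> V \<and> successively E ws"
  unfolding is_walk_def successively_conv_nth by auto

lemma transitions_iff:
  assumes "\<And>x y. E x y \<Longrightarrow> E y x"
  shows "(b, {a, c}) \<in> transitions E \<longleftrightarrow> a \<noteq> c \<and> E a b \<and> E b c"
proof
  assume "(b, {a, c}) \<in> transitions E"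
  then obtain a' c' where "{a, c} = {a', c'}" "E a' b" "E b c'" "a' \<noteq> c'"
    unfolding transitions_def by blast
  then show "a \<noteq> c \<and> E a b \<and> E b c"
    using assms by (auto simp: doubleton_eq_iff)
qed (auto simp: transitions_def)

lemma finite_transitions:
  assumes "simple_graph V E"
  shows "finite (transitions E)"
proof (rule finite_subset)
  show "transitions E \<subseteq> V \<times> Pow V"
    using assms unfolding simple_graph_def transitions_def by auto
  show "finite (V \<times> Pow V)"
    using simple_graphD(1)[OF assms] by simp
qed

lemma connected_graph_neighbour:
  assumes "connected_graph V E" and "2 \<le> card V" and "x \<in> V"
  obtains y where "E x y"
proof -
  have "V \<noteq> {x}"
    using assms(2) by auto
  then obtain v where "v \<in> V" "v \<noteq> x"
    using assms(3) by blast
  then obtain ws where ws: "is_walk V E ws" "hd ws = x" "last ws = v"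
    using assms(1,3) unfolding connected_graph_def by blast
  then obtain y r where "ws = x # y # r"
    using \<open>v \<noteq> x\<close> unfolding is_walk_def
    by (metis last_ConsL list.exhaust list.sel(1))
  then show thesis
    using ws(1) that unfolding is_walk_iff by auto
qed

definition delete_vertex :: "('a \<Rightarrow> 'a \<Rightarrow> bool) \<Rightarrow> 'a \<Rightarrow> 'a \<Rightarrow> 'a \<Rightarrow> bool" where
  "delete_vertex E l x y \<longleftrightarrow> E x y \<and> x \<noteq> l \<and> y \<noteq> l"

definition redirect :: "'a \<Rightarrow> 'a \<Rightarrow> 'a \<Rightarrow> 'a" where
  "redirect l x v = (if v = l then x else v)"

lemma acyclic_path_start_neighbour:
  assumes "\<not> has_cycle V E" and "\<And>x y. E x y \<Longrightarrow> E y x"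
    and path: "distinct (l # y # rest)" "successively E (l # y # rest)" "set (l # y # rest) \<subseteq> V"
    and "E l z"
  shows "z \<notin> set rest"
proof
  assume "z \<in> set rest"
  then obtain r1 r2 where rest: "rest = r1 @ z # r2"
    by (meson split_list)
  define cs where "cs = l # y # r1 @ [z]"
  have "l # y # rest = cs @ r2"
    unfolding cs_def rest by simp
  then have "successively E cs"
    using path(2) successively_append_iff[of E cs r2] by simp
  moreover have "distinct cs" and "set cs \<subseteq> V"
    using path(1,3) unfolding cs_def rest by auto
  moreover have "E (last cs) (hd cs)"
    using assms(2,6) unfolding cs_def by simp
  ultimately have "has_cycle V E"
    unfolding has_cycle_def is_walk_iff by (intro exI[of _ cs]) (auto simp: cs_def)
  with assms(1) show False ..
qed

lemma tree_has_leaf: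
  assumes tree: "is_tree V E" and "2 \<le> card V"
  obtains l p where "E l p" and "\<And>y. E l y \<Longrightarrow> y = p"
proof -
  have sg: "simple_graph V E" and cg: "connected_graph V E" and acyclic: "\<not> has_cycle V E"
    using tree unfolding is_tree_def by auto
  note G = simple_graphD[OF sg]
  define has_path where "has_path k \<longleftrightarrow>
    (\<exists>ws. distinct ws \<and> successively E ws \<and> set ws \<subseteq> V \<and> 2 \<le> length ws \<and> length ws = k)" for k
  obtain a where "a \<in> V"
    using \<open>2 \<le> card V\<close> by fastforce
  then obtain b where "E a b"
    using connected_graph_neighbour[OF cg \<open>2 \<le> card V\<close>] by blast
  moreover have "a \<noteq> b"
    using \<open>E a b\<close> G(3) by auto
  ultimately have "has_path 2"
    unfolding has_path_def using G(4,5) by (intro exI[of _ "[a, b]"]) auto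
  moreover have "\<forall>k. has_path k \<longrightarrow> k \<le> card V"
    unfolding has_path_def using G(1) by (metis card_mono distinct_card)
  ultimately obtain k where "has_path k" and longest: "\<And>k'. has_path k' \<Longrightarrow> k' \<le> k"
    using Nat.ex_has_greatest_nat by metis
  then obtain l y rest where path: "distinct (l # y # rest)" "successively E (l # y # rest)"
      "set (l # y # rest) \<subseteq> V" "length (l # y # rest) = k"
    unfolding has_path_def by (metis Suc_le_length_iff numeral_2_eq_2)
  have "z = y" if "E l z" for z
  proof (rule ccontr)
    assume "z \<noteq> y"
    show False
    proof (cases "z \<in> set (l # y # rest)")
      case True
      then have "z \<in> set rest"
        using \<open>z \<noteq> y\<close> \<open>E l z\<close> G(3) by auto
      then show False
        using acyclic_path_start_neighbour[OF acyclic G(2) path(1-3) \<open>E l z\<close>] by blast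
    next
      case False
      then have "has_path (Suc k)"
        unfolding has_path_def using path \<open>E l z\<close> G(2)[OF \<open>E l z\<close>] G(5)
        by (intro exI[of _ "z # l # y # rest"]) auto
      then show False
        using longest by fastforce
    qed
  qed
  with path(2) show thesis
    using that by auto
qed

lemma connected_graph_delete_leaf:
  assumes sg: "simple_graph V E" and cg: "connected_graph V E"
    and "E l p" and leaf: "\<And>y. E l y \<Longrightarrow> y = p"
  shows "connected_graph (V - {l}) (delete_vertex E l)"
  unfolding connected_graph_def
proof (intro ballI)
  fix u v assume u: "u \<in> V - {l}" and v: "v \<in> V - {l}"
  note G = simple_graphD[OF sg]
  let ?f = "redirect l p"
  obtain ws where ws: "ws \<noteq> []" "set ws \<subseteq> V" "successively E ws" "hd ws = u" "last ws = v"
    using cg u v unfolding connected_graph_def is_walk_iff by blast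
  have edge: "?f x = ?f y \<or> delete_vertex E l (?f x) (?f y)" if "E x y" for x y
  proof (cases "x = l \<or> y = l")
    case True
    then have "x = l \<and> y = p \<or> x = p \<and> y = l"
      using \<open>E x y\<close> leaf G(2) by blast
    then show ?thesis
      by (auto simp: redirect_def)
  next
    case False
    then show ?thesis
      using \<open>E x y\<close> by (simp add: redirect_def delete_vertex_def)
  qed
  define ws' where "ws' = remdups_adj (map ?f ws)"
  have "successively (\<lambda>x y. x = y \<or> delete_vertex E l x y) (map ?f ws)"
    unfolding successively_map by (rule successively_mono[OF ws(3)]) (erule edge)
  then have "successively (delete_vertex E l) ws'"
    unfolding ws'_def by (rule successively_remdups_adj_reflclp)
  moreover have "set ws' \<subseteq> V - {l}"
    using ws(2) G(5)[OF \<open>E l p\<close>] G(3)[of l] \<open>E l p\<close> by (auto simp: ws'_def redirect_def)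
  moreover have "ws' \<noteq> []" and "hd ws' = u" and "last ws' = v"
    using ws u v by (auto simp: ws'_def redirect_def hd_map last_map)
  ultimately show "\<exists>ws. is_walk (V - {l}) (delete_vertex E l) ws \<and> hd ws = u \<and> last ws = v"
    unfolding is_walk_iff by blast
qed

lemma is_tree_delete_leaf:
  assumes tree: "is_tree V E" and "E l p" and leaf: "\<And>y. E l y \<Longrightarrow> y = p"
  shows "is_tree (V - {l}) (delete_vertex E l)"
proof -
  have sg: "simple_graph V E" and cg: "connected_graph V E" and acyclic: "\<not> has_cycle V E"
    using tree unfolding is_tree_def by auto
  have "simple_graph (V - {l}) (delete_vertex E l)"
    using sg unfolding simple_graph_def delete_vertex_def by auto
  moreover have "\<not> has_cycle (V - {l}) (delete_vertex E l)"
  proof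
    assume "has_cycle (V - {l}) (delete_vertex E l)"
    then have "has_cycle V E"
      unfolding has_cycle_def is_walk_iff delete_vertex_def
      by (metis (no_types, lifting) Diff_subset order_trans successively_mono)
    with acyclic show False ..
  qed
  ultimately show ?thesis
    unfolding is_tree_def using connected_graph_delete_leaf[OF sg cg \<open>E l p\<close> leaf] by blast
qed

lemma tree_leaf_decomposition:
  assumes tree: "is_tree V E" and "3 \<le> card V"
  obtains l p q where "E l p" and "\<And>y. E l y \<Longrightarrow> y = p" and "delete_vertex E l p q"
    and "is_tree (V - {l}) (delete_vertex E l)" and "card (V - {l}) = card V - 1"
proof -
  have sg: "simple_graph V E"
    using tree unfolding is_tree_def by auto
  note G = simple_graphD[OF sg]
  obtain l p where "E l p" and leaf: "\<And>y. E l y \<Longrightarrow> y = p"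
    using tree_has_leaf[OF tree] \<open>3 \<le> card V\<close> by auto
  have tree': "is_tree (V - {l}) (delete_vertex E l)"
    using is_tree_delete_leaf[OF tree \<open>E l p\<close> leaf] .
  have card': "card (V - {l}) = card V - 1"
    using G(1) G(4)[OF \<open>E l p\<close>] by simp
  have "p \<in> V - {l}"
    using \<open>E l p\<close> G(3,5) by blast
  moreover have "2 \<le> card (V - {l})"
    using card' \<open>3 \<le> card V\<close> by simp
  ultimately obtain q where "delete_vertex E l p q"
    using connected_graph_neighbour tree' unfolding is_tree_def by metis
  with \<open>E l p\<close> leaf tree' card' show thesis
    using that by blast
qed

inductive arc_step :: "('a \<Rightarrow> 'a \<Rightarrow> bool) \<Rightarrow> ('a \<times> 'a set) set \<Rightarrow> 'a \<times> 'a \<Rightarrow> 'a \<times> 'a \<Rightarrow> bool"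
  for E T where
  "E y z \<Longrightarrow> x = z \<or> (y, {x, z}) \<in> T \<Longrightarrow> arc_step E T (x, y) (y, z)"

definition arcs_strongly_connected :: "('a \<Rightarrow> 'a \<Rightarrow> bool) \<Rightarrow> ('a \<times> 'a set) set \<Rightarrow> bool" where
  "arcs_strongly_connected E T \<longleftrightarrow> (\<forall>x y z w. E x y \<longrightarrow> E z w \<longrightarrow> (arc_step E T)\<^sup>*\<^sup>* (x, y) (z, w))"

lemma arc_reachable_walk:
  assumes "(arc_step E T)\<^sup>*\<^sup>* (x, y) (z, w)" and "E x y"
  obtains ws where "successively E (ws @ [z, w])" and "T_compatible T (ws @ [z, w])"
    and "hd (ws @ [z, w]) = x"
proof -
  from assms(1) have "\<exists>ws. successively E (ws @ [z, w]) \<and> T_compatible T (ws @ [z, w]) \<and>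
      hd (ws @ [z, w]) = x"
  proof (induction rule: rtranclp_induct2)
    case refl
    then show ?case
      using \<open>E x y\<close> by (intro exI[of _ "[]"]) simp
  next
    case (step z w w' v)
    then obtain ws where ws: "successively E (ws @ [z, w])" "T_compatible T (ws @ [z, w])"
      "hd (ws @ [z, w]) = x"
      by blast
    from step.hyps(2) have "w' = w" and "E w v" and "z = v \<or> (w, {z, v}) \<in> T"
      by (auto elim: arc_step.cases)
    moreover have "ws @ [z, w, v] = (ws @ [z]) @ [w, v]"
      by simp
    ultimately show ?case
      using ws T_compatible_append[of T ws z w "[v]"] successively_append_iff[of E "ws @ [z, w]" "[v]"]
      by (intro exI[of _ "ws @ [z]"]) (auto simp: hd_append)
  qed
  with that show thesis
    by blast
qed

lemma successively_set_subset:
  assumes "successively E (ws @ [z, w])" and "\<And>x y. E x y \<Longrightarrow> x \<in> V \<and> y \<in> V"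
  shows "set (ws @ [z, w]) \<subseteq> V"
  using assms by (induction ws) (auto simp: successively_Cons)

lemma connecting_transition_set_if_arcs_strongly_connected:
  assumes sg: "simple_graph V E" and cg: "connected_graph V E" and "2 \<le> card V"
    and "T \<subseteq> transitions E" and sc: "arcs_strongly_connected E T"
  shows "connecting_transition_set V E T"
  unfolding connecting_transition_set_def
proof (intro conjI ballI)
  fix u v assume "u \<in> V" and "v \<in> V"
  note G = simple_graphD[OF sg]
  obtain u' where "E u u'"
    using connected_graph_neighbour[OF cg \<open>2 \<le> card V\<close> \<open>u \<in> V\<close>] .
  obtain v' where "E v v'"
    using connected_graph_neighbour[OF cg \<open>2 \<le> card V\<close> \<open>v \<in> V\<close>] .
  then have "E v' v"
    by (rule G(2))
  then have reach: "(arc_step E T)\<^sup>*\<^sup>* (u, u') (v', v)"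
    using sc \<open>E u u'\<close> unfolding arcs_strongly_connected_def by blast
  obtain ws where ws: "successively E (ws @ [v', v])" "T_compatible T (ws @ [v', v])"
      "hd (ws @ [v', v]) = u"
    by (rule arc_reachable_walk[OF reach \<open>E u u'\<close>])
  moreover have "set (ws @ [v', v]) \<subseteq> V"
    by (rule successively_set_subset[OF ws(1)]) (simp add: G(4,5))
  ultimately show "\<exists>ws. is_walk V E ws \<and> T_compatible T ws \<and> hd ws = u \<and> last ws = v"
    unfolding is_walk_iff by (intro exI[of _ "ws @ [v', v]"]) simp
qed (rule \<open>T \<subseteq> transitions E\<close>)

lemma arcs_strongly_connected_single_edge:
  assumes "E a b" and "E b a" and only: "\<And>x y. E x y \<Longrightarrow> {x, y} = {a, b}"
  shows "arcs_strongly_connected E T"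
proof -
  have "arc_step E T (a, b) (b, a)" and "arc_step E T (b, a) (a, b)"
    using assms(1,2) by (auto intro: arc_step.intros)
  then have "(arc_step E T)\<^sup>*\<^sup>* \<alpha> \<beta>" if "\<alpha> \<in> {(a, b), (b, a)}" and "\<beta> \<in> {(a, b), (b, a)}" for \<alpha> \<beta>
    using that by auto
  then show ?thesis
    unfolding arcs_strongly_connected_def using only by (simp add: doubleton_eq_iff)
qed

lemma arcs_strongly_connected_add_leaf:
  assumes sym: "\<And>x y. E x y \<Longrightarrow> E y x"
    and sc: "arcs_strongly_connected (delete_vertex E l) T"
    and "E l p" and leaf: "\<And>y. E l y \<Longrightarrow> y = p" and pq: "delete_vertex E l p q"
  shows "arcs_strongly_connected E (insert (p, {l, q}) T)"
proof -
  let ?R = "(arc_step E (insert (p, {l, q}) T))\<^sup>*\<^sup>*"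
  have old: "?R (x, y) (z, w)" if "delete_vertex E l x y" and "delete_vertex E l z w" for x y z w
  proof -
    have "(arc_step (delete_vertex E l) T)\<^sup>*\<^sup>* (x, y) (z, w)"
      using sc that unfolding arcs_strongly_connected_def by blast
    then show ?thesis
      by (rule mono_rtranclp[rule_format, rotated])
        (auto elim!: arc_step.cases intro: arc_step.intros simp: delete_vertex_def)
  qed
  have "E p l" and "E q p"
    using sym \<open>E l p\<close> sym[of p q] pq unfolding delete_vertex_def by auto
  then have turn_in: "?R (q, p) (p, l)" and bounce: "?R (p, l) (l, p)" and turn_out: "?R (l, p) (p, q)"
    using \<open>E l p\<close> pq unfolding delete_vertex_def
    by (auto intro!: r_into_rtranclp arc_step.intros simp: insert_commute)
  have qp: "?R (p, q) (q, p)"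
    using old pq \<open>E q p\<close> unfolding delete_vertex_def by blast
  have hub: "?R (x, y) (p, q) \<and> ?R (p, q) (x, y)" if "E x y" for x y
  proof (cases "x = l \<or> y = l")
    case True
    then have "(x, y) = (l, p) \<or> (x, y) = (p, l)"
      using \<open>E x y\<close> leaf sym[OF \<open>E x y\<close>] by blast
    then show ?thesis
      using turn_in bounce turn_out qp by (auto intro: rtranclp_trans)
  next
    case False
    then show ?thesis
      using old[of x y p q] old[of p q x y] \<open>E x y\<close> pq unfolding delete_vertex_def by blast
  qed
  show ?thesis
    unfolding arcs_strongly_connected_def using hub by (blast intro: rtranclp_trans)
qed

lemma transitions_delete_vertexD:
  "(b, S) \<in> transitions (delete_vertex E l) \<Longrightarrow> l \<notin> S"
  and transitions_delete_vertex_subset: "transitions (delete_vertex E l) \<subseteq> transitions E"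
  unfolding transitions_def delete_vertex_def by auto

lemma tree_has_arcs_strongly_connected_transition_set:
  assumes "is_tree V E" and "card V = n + 2"
  shows "\<exists>T \<subseteq> transitions E. arcs_strongly_connected E T \<and> card T = n"
  using assms
proof (induction n arbitrary: V E)
  case 0
  then have sg: "simple_graph V E" and cg: "connected_graph V E" and "card V = 2"
    unfolding is_tree_def by auto
  note G = simple_graphD[OF sg]
  obtain a b where V: "V = {a, b}" and "a \<noteq> b"
    using \<open>card V = 2\<close> by (meson card_2_iff)
  have only: "{x, y} = {a, b}" if "E x y" for x y
  proof -
    have "x \<in> V" and "y \<in> V" and "x \<noteq> y"
      using G(3)[of x] G(4,5)[OF that] that by auto
    then show ?thesis
      using V by auto
  qed
  have "2 \<le> card V" and "a \<in> V"
    using V \<open>card V = 2\<close> by simp_all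
  then obtain y where "E a y"
    using connected_graph_neighbour[OF cg] by blast
  moreover have "y = b"
    using only[OF \<open>E a y\<close>] \<open>a \<noteq> b\<close> by (auto simp: doubleton_eq_iff)
  ultimately have "E a b"
    by simp
  then have "arcs_strongly_connected E {}"
    using G(2)[OF \<open>E a b\<close>] only by (rule arcs_strongly_connected_single_edge)
  then show ?case
    by (metis card.empty empty_subsetI)
next
  case (Suc n)
  have "3 \<le> card V"
    using Suc.prems(2) by simp
  then obtain l p q where "E l p" and leaf: "\<And>y. E l y \<Longrightarrow> y = p" and pq: "delete_vertex E l p q"
    and tree': "is_tree (V - {l}) (delete_vertex E l)" and card': "card (V - {l}) = card V - 1"
    using tree_leaf_decomposition[OF Suc.prems(1)] by blast
  have "card (V - {l}) = n + 2"
    using card' Suc.prems(2) by simp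
  then obtain T where T: "T \<subseteq> transitions (delete_vertex E l)"
      "arcs_strongly_connected (delete_vertex E l) T" "card T = n"
    using Suc.IH[OF tree'] by blast
  have sg: "simple_graph V E"
    using Suc.prems(1) unfolding is_tree_def by blast
  note G = simple_graphD[OF sg]
  have "(p, {l, q}) \<in> transitions E"
    using \<open>E l p\<close> pq unfolding transitions_def delete_vertex_def by blast
  then have "insert (p, {l, q}) T \<subseteq> transitions E"
    using T(1) transitions_delete_vertex_subset[of E l] by blast
  moreover have "card (insert (p, {l, q}) T) = Suc n"
  proof -
    have "finite T"
      using T(1) transitions_delete_vertex_subset finite_transitions[OF sg] by (meson finite_subset)
    moreover have "(p, {l, q}) \<notin> T"
      using T(1) by (auto dest: transitions_delete_vertexD)
    ultimately show ?thesis
      using T(3) by simp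
  qed
  ultimately show ?case
    using arcs_strongly_connected_add_leaf[OF G(2) T(2) \<open>E l p\<close> leaf pq] by blast
qed

lemma leaf_turn_exists:
  assumes "successively E ws" and "T_compatible T ws" and "ws \<noteq> []" and "hd ws = l"
    and "last ws \<notin> {l, p}" and leaf: "\<And>y. E l y \<Longrightarrow> y = p"
  obtains y where "y \<noteq> l" and "(p, {l, y}) \<in> T"
proof -
  from assms(1-5) have "\<exists>y. y \<noteq> l \<and> (p, {l, y}) \<in> T"
  proof (induction ws rule: induct_list012)
    case (3 x y zs)
    then have "x = l" and "y = p"
      using leaf by auto
    then obtain c r where zs: "zs = c # r"
      using "3.prems"(5) by (cases zs) auto
    show ?case
    proof (cases "c = l")
      case True
      then show ?thesis
        using "3.IH"(1) "3.prems" zs T_compatible_ConsD[of T y zs] by auto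
    next
      case False
      then show ?thesis
        using "3.prems"(2) zs \<open>x = l\<close> \<open>y = p\<close> by auto
    qed
  qed simp_all
  with that show thesis
    by blast
qed

lemma leaf_not_middle:
  assumes "\<And>x y. E x y \<Longrightarrow> E y x" and "\<And>y. E l y \<Longrightarrow> y = p"
    and "E a b" and "E b c" and "a \<noteq> c"
  shows "b \<noteq> l"
  using assms by blast

definition contract_leaf :: "'a \<Rightarrow> 'a \<Rightarrow> 'a \<Rightarrow> ('a \<times> 'a set) set \<Rightarrow> ('a \<times> 'a set) set" where
  "contract_leaf l p x T = apsnd (\<lambda>S. redirect l x ` S) ` T - {(p, {x})}"

lemma card_contract_leaf_less:
  assumes "finite T" and "(p, {l, x}) \<in> T"
  shows "card (contract_leaf l p x T) < card T"
proof -
  let ?A = "apsnd (\<lambda>S. redirect l x ` S) ` T"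
  have "apsnd (\<lambda>S. redirect l x ` S) (p, {l, x}) = (p, {x})"
    by (auto simp: redirect_def)
  then have "(p, {x}) \<in> ?A"
    using assms(2) by (rule image_eqI[OF sym])
  then have "card (?A - {(p, {x})}) < card ?A"
    using assms(1) by (intro card_Diff1_less) simp_all
  also have "\<dots> \<le> card T"
    using assms(1) by (rule card_image_le)
  finally show ?thesis
    unfolding contract_leaf_def .
qed

lemma delete_vertex_redirect:
  assumes sg: "simple_graph V E" and "E l p" and leaf: "\<And>y. E l y \<Longrightarrow> y = p"
    and "E p x" and "x \<noteq> l" and "E a b"
  shows "delete_vertex E l (redirect l x a) (redirect l x b)"
proof -
  note G = simple_graphD[OF sg]
  have "p \<noteq> l"
    using G(3) \<open>E l p\<close> by blast
  consider "a = l" "b = p" | "b = l" "a = p" | "a \<noteq> l" "b \<noteq> l"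
    using leaf \<open>E a b\<close> G(2)[OF \<open>E a b\<close>] by blast
  then show ?thesis
    by cases (use \<open>p \<noteq> l\<close> \<open>x \<noteq> l\<close> \<open>E p x\<close> G(2)[OF \<open>E p x\<close>] \<open>E a b\<close> in
      \<open>simp_all add: delete_vertex_def redirect_def\<close>)
qed

lemma contract_leaf_memE:
  assumes "t \<in> contract_leaf l p x T"
  obtains b S where "(b, S) \<in> T" and "t = (b, redirect l x ` S)" and "t \<noteq> (p, {x})"
  using assms unfolding contract_leaf_def by auto

lemma contract_leaf_subset_transitions:
  assumes sg: "simple_graph V E" and "E l p" and leaf: "\<And>y. E l y \<Longrightarrow> y = p"
    and "E p x" and "x \<noteq> l" and T: "T \<subseteq> transitions E"
  shows "contract_leaf l p x T \<subseteq> transitions (delete_vertex E l)"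
proof
  fix t assume "t \<in> contract_leaf l p x T"
  then obtain b S where "(b, S) \<in> T" and t: "t = (b, redirect l x ` S)" and "t \<noteq> (p, {x})"
    by (rule contract_leaf_memE)
  note G = simple_graphD[OF sg]
  let ?f = "redirect l x"
  obtain a c where S: "S = {a, c}" and "a \<noteq> c" and "E a b" and "E b c"
    using T \<open>(b, S) \<in> T\<close> unfolding transitions_def by blast
  have "b \<noteq> l"
    using leaf_not_middle[OF G(2) leaf \<open>E a b\<close> \<open>E b c\<close> \<open>a \<noteq> c\<close>] .
  have "?f a \<noteq> ?f c"
  proof
    assume "?f a = ?f c"
    then have "S = {l, x}"
      using \<open>a \<noteq> c\<close> unfolding S redirect_def by (auto split: if_splits)
    then have "b = p"
      using leaf \<open>E a b\<close> \<open>E b c\<close> G(2) unfolding S doubleton_eq_iff by blast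
    with \<open>S = {l, x}\<close> show False
      using \<open>t \<noteq> (p, {x})\<close> unfolding t by (auto simp: redirect_def)
  qed
  moreover have "delete_vertex E l (?f a) b" and "delete_vertex E l b (?f c)"
    using delete_vertex_redirect[OF sg \<open>E l p\<close> leaf \<open>E p x\<close> \<open>x \<noteq> l\<close>] \<open>E a b\<close> \<open>E b c\<close> \<open>b \<noteq> l\<close>
    by (metis redirect_def)+
  ultimately show "t \<in> transitions (delete_vertex E l)"
    unfolding t S transitions_def by auto
qed

lemma T_compatible_contract_leaf:
  assumes sg: "simple_graph V E" and leaf: "\<And>y. E l y \<Longrightarrow> y = p"
    and "successively E ws" and "T_compatible T ws"
  shows "T_compatible (contract_leaf l p x T) (map (redirect l x) ws)"
  using assms(3,4)
proof (rule T_compatible_map)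
  fix a b c assume "E a b" and "E b c" and "a \<noteq> c" and "(b, {a, c}) \<in> T"
  note G = simple_graphD[OF sg]
  have "b \<noteq> l"
    using leaf_not_middle[OF G(2) leaf \<open>E a b\<close> \<open>E b c\<close> \<open>a \<noteq> c\<close>] .
  then have "(redirect l x b, {redirect l x a, redirect l x c}) \<in> apsnd (\<lambda>S. redirect l x ` S) ` T"
    using \<open>(b, {a, c}) \<in> T\<close> by (force simp: redirect_def)
  then show "redirect l x a = redirect l x c \<or>
      (redirect l x b, {redirect l x a, redirect l x c}) \<in> contract_leaf l p x T"
    unfolding contract_leaf_def by auto
qed

lemma connecting_transition_set_contract_leaf:
  assumes sg: "simple_graph V E" and "E l p" and leaf: "\<And>y. E l y \<Longrightarrow> y = p"
    and "E p x" and "x \<noteq> l" and conn: "connecting_transition_set V E T"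
  shows "connecting_transition_set (V - {l}) (delete_vertex E l) (contract_leaf l p x T)"
  unfolding connecting_transition_set_def
proof (intro conjI ballI)
  have "T \<subseteq> transitions E"
    using conn unfolding connecting_transition_set_def by blast
  then show "contract_leaf l p x T \<subseteq> transitions (delete_vertex E l)"
    using contract_leaf_subset_transitions[OF sg \<open>E l p\<close> leaf \<open>E p x\<close> \<open>x \<noteq> l\<close>] by blast
next
  fix u v assume u: "u \<in> V - {l}" and v: "v \<in> V - {l}"
  then obtain ws where ws: "ws \<noteq> []" "set ws \<subseteq> V" "successively E ws" "T_compatible T ws"
      "hd ws = u" "last ws = v"
    using conn unfolding connecting_transition_set_def is_walk_iff by blast
  note G = simple_graphD[OF sg]
  have "successively (delete_vertex E l) (map (redirect l x) ws)"
    unfolding successively_map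
    by (rule successively_mono[OF ws(3)])
      (rule delete_vertex_redirect[OF sg \<open>E l p\<close> leaf \<open>E p x\<close> \<open>x \<noteq> l\<close>])
  moreover have "T_compatible (contract_leaf l p x T) (map (redirect l x) ws)"
    using T_compatible_contract_leaf[OF sg leaf ws(3,4)] .
  moreover have "set (map (redirect l x) ws) \<subseteq> V - {l}"
    using ws(2) G(5)[OF \<open>E p x\<close>] \<open>x \<noteq> l\<close> by (auto simp: redirect_def)
  moreover have "hd (map (redirect l x) ws) = u" and "last (map (redirect l x) ws) = v"
    using ws u v by (auto simp: redirect_def hd_map last_map)
  ultimately show "\<exists>ws. is_walk (V - {l}) (delete_vertex E l) ws \<and>
      T_compatible (contract_leaf l p x T) ws \<and> hd ws = u \<and> last ws = v"
    using ws(1) unfolding is_walk_iff by (intro exI[of _ "map (redirect l x) ws"]) simp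
qed

lemma tree_connecting_transition_set_card_ge:
  assumes "is_tree V E" and "card V = n + 2" and "connecting_transition_set V E T"
  shows "n \<le> card T"
  using assms
proof (induction n arbitrary: V E T)
  case (Suc n)
  have sg: "simple_graph V E"
    using Suc.prems(1) unfolding is_tree_def by blast
  note G = simple_graphD[OF sg]
  have "3 \<le> card V"
    using Suc.prems(2) by simp
  then obtain l p q where "E l p" and leaf: "\<And>y. E l y \<Longrightarrow> y = p" and pq: "delete_vertex E l p q"
    and tree': "is_tree (V - {l}) (delete_vertex E l)" and card': "card (V - {l}) = card V - 1"
    using tree_leaf_decomposition[OF Suc.prems(1)] by blast
  have T: "T \<subseteq> transitions E"
    using Suc.prems(3) unfolding connecting_transition_set_def by blast
  have "l \<in> V" and "q \<in> V"
    using G(4)[OF \<open>E l p\<close>] G(5) pq unfolding delete_vertex_def by auto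
  then obtain ws where "successively E ws" "T_compatible T ws" "ws \<noteq> []" "hd ws = l" "last ws = q"
    using Suc.prems(3) unfolding connecting_transition_set_def is_walk_iff by blast
  moreover have "q \<notin> {l, p}"
    using pq G(3) unfolding delete_vertex_def by auto
  ultimately obtain x where "x \<noteq> l" and "(p, {l, x}) \<in> T"
    using leaf_turn_exists[where p = p] leaf by metis
  then have "E p x"
    using T transitions_iff[of E p l x] G(2) by blast
  have "connecting_transition_set (V - {l}) (delete_vertex E l) (contract_leaf l p x T)"
    using connecting_transition_set_contract_leaf[OF sg \<open>E l p\<close> leaf \<open>E p x\<close> \<open>x \<noteq> l\<close> Suc.prems(3)] .
  moreover have "card (V - {l}) = n + 2"
    using card' Suc.prems(2) by simp
  ultimately have "n \<le> card (contract_leaf l p x T)"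
    using Suc.IH[OF tree'] by blast
  also have "\<dots> < card T"
    using finite_subset[OF T finite_transitions[OF sg]] \<open>(p, {l, x}) \<in> T\<close>
    by (rule card_contract_leaf_less)
  finally show ?case
    by simp
qed simp

theorem lemma1:
  fixes V :: "'a set" and E :: "'a \<Rightarrow> 'a \<Rightarrow> bool"
  assumes "is_tree V E" and "card V \<ge> 2"
  shows "(\<exists>T. min_connecting_transition_set V E T) \<and>
         (\<forall>T. min_connecting_transition_set V E T \<longrightarrow> card T = card V - 2)"
proof -
  have sg: "simple_graph V E" and cg: "connected_graph V E"
    using assms(1) unfolding is_tree_def by auto
  have card: "card V = (card V - 2) + 2"
    using assms(2) by simp
  obtain T0 where "T0 \<subseteq> transitions E" and "arcs_strongly_connected E T0"
    and card_T0: "card T0 = card V - 2"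
    using tree_has_arcs_strongly_connected_transition_set[OF assms(1) card] by blast
  then have conn: "connecting_transition_set V E T0"
    using connecting_transition_set_if_arcs_strongly_connected[OF sg cg assms(2)] by blast
  have lower: "card V - 2 \<le> card T" if "connecting_transition_set V E T" for T
    using tree_connecting_transition_set_card_ge[OF assms(1) card that] .
  have "min_connecting_transition_set V E T0"
    unfolding min_connecting_transition_set_def using conn lower card_T0 by simp
  moreover have "card T = card V - 2" if "min_connecting_transition_set V E T" for T
  proof -
    have "connecting_transition_set V E T" and "card T \<le> card T0"
      using that conn unfolding min_connecting_transition_set_def by blast+
    then show ?thesis
      using lower[of T] card_T0 by linarith
  qed
  ultimately show ?thesis
    by blast
qed

end
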